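(* Let $G$ be a graph on $n$ vertices. If $G$ has a spanning subgraph $H$ (i.e. $H$ has the same vertex set as $G$ and $E(H)\subseteq E(G)$) such that $H$ is bipartite and $\delta(H)\geq 2$, then $F(G)\geq \lceil n/2\rceil$.
   Context: All graphs are finite and simple. Given a graph $G=(V,E)$ and a set $S\subseteq V$ of filled vertices, the color change rule is: if a filled vertex $v$ has exactly one unfilled neighbor $w$, then $w$ becomes filled. The derived set of $S$ is the set of filled vertices obtained after applying the rule until no further application is possible. $S$ is a zero forcing set if its derived set is $V$; otherwise $S$ is a failed zero forcing set. The failed zero forcing number $F(G)$ is the maximum size of a failed zero forcing set of $G$. *)

theory Defs
  imports Complex_Main
begin

definition simple_graph :: "'a set \<Rightarrow> ('a \<Rightarrow> 'a \<Rightarrow> bool) \<Rightarrow> bool" where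
  "simple_graph V E \<longleftrightarrow> finite V \<and> (\<forall>u v. E u v \<longrightarrow> E v u)
     \<and> (\<forall>v. \<not> E v v) \<and> (\<forall>u v. E u v \<longrightarrow> u \<in> V \<and> v \<in> V)"

inductive_set derived :: "'a set \<Rightarrow> ('a \<Rightarrow> 'a \<Rightarrow> bool) \<Rightarrow> 'a set \<Rightarrow> 'a set"
  for V :: "'a set" and E :: "'a \<Rightarrow> 'a \<Rightarrow> bool" and S :: "'a set" where
  init: "x \<in> S \<Longrightarrow> x \<in> derived V E S"
| force: "\<lbrakk> v \<in> derived V E S; E v w; w \<in> V;
            \<forall>u. E v u \<and> u \<noteq> w \<longrightarrow> u \<in> derived V E S \<rbrakk> \<Longrightarrow> w \<in> derived V E S"

definition zero_forcing_set :: "'a set \<Rightarrow> ('a \<Rightarrow> 'a \<Rightarrow> bool) \<Rightarrow> 'a set \<Rightarrow> bool" where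
  "zero_forcing_set V E S \<longleftrightarrow> S \<subseteq> V \<and> derived V E S = V"

definition failed_zero_forcing_set :: "'a set \<Rightarrow> ('a \<Rightarrow> 'a \<Rightarrow> bool) \<Rightarrow> 'a set \<Rightarrow> bool" where
  "failed_zero_forcing_set V E S \<longleftrightarrow> S \<subseteq> V \<and> derived V E S \<noteq> V"

definition failed_zf_number :: "'a set \<Rightarrow> ('a \<Rightarrow> 'a \<Rightarrow> bool) \<Rightarrow> nat" where
  "failed_zf_number V E = Max {card S | S. failed_zero_forcing_set V E S}"

definition bipartite :: "'a set \<Rightarrow> ('a \<Rightarrow> 'a \<Rightarrow> bool) \<Rightarrow> bool" where
  "bipartite V E \<longleftrightarrow> (\<exists>A \<subseteq> V. \<forall>u v. E u v \<longrightarrow> (u \<in> A \<longleftrightarrow> v \<notin> A))"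

definition degree :: "'a set \<Rightarrow> ('a \<Rightarrow> 'a \<Rightarrow> bool) \<Rightarrow> 'a \<Rightarrow> nat" where
  "degree V E v = card {u \<in> V. E v u}"

definition min_degree_ge :: "'a set \<Rightarrow> ('a \<Rightarrow> 'a \<Rightarrow> bool) \<Rightarrow> nat \<Rightarrow> bool" where
  "min_degree_ge V E k \<longleftrightarrow> (\<forall>v \<in> V. k \<le> degree V E v)"

end

theory Submission
  imports Defs
begin

text \<open>Each side of the bipartition of H is a fort of G: a vertex outside it has all of its
  (at least two) H-neighbours inside it, hence at least two G-neighbours there, so no vertex of
  the side can ever be forced from its complement. The complement of a fort is therefore a
  failed zero forcing set, and the complement of the smaller side has at least n/2 vertices.\<close>

definition fort :: "'a set \<Rightarrow> ('a \<Rightarrow> 'a \<Rightarrow> bool) \<Rightarrow> 'a set \<Rightarrow> bool" where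
  "fort V E F \<longleftrightarrow> F \<subseteq> V \<and> F \<noteq> {} \<and> (\<forall>v \<in> V - F. \<not> (\<exists>!u. u \<in> F \<and> E v u))"

lemma fort_disjoint_derived_complement:
  assumes "simple_graph V E" and "fort V E F"
  shows "derived V E (V - F) \<inter> F = {}"
proof -
  have "x \<in> derived V E (V - F) \<Longrightarrow> x \<notin> F" for x
  proof (induction rule: derived.induct)
    case (init x)
    then show ?case by blast
  next
    case (force v w)
    show ?case
    proof
      assume "w \<in> F"
      have "v \<in> V - F"
        using assms(1) force.hyps force.IH unfolding simple_graph_def by blast
      then have "\<not> (\<exists>!u. u \<in> F \<and> E v u)"
        using assms(2) unfolding fort_def by blast
      with \<open>w \<in> F\<close> \<open>E v w\<close> obtain u where "u \<noteq> w" "u \<in> F" "E v u" by metis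
      with force.hyps force.IH show False by blast
    qed
  qed
  then show ?thesis by blast
qed

lemma fort_complement_failed:
  assumes "simple_graph V E" and "fort V E F"
  shows "failed_zero_forcing_set V E (V - F)"
proof -
  from assms(2) obtain x where "x \<in> F" "F \<subseteq> V"
    unfolding fort_def by blast
  moreover have "x \<notin> derived V E (V - F)"
    using fort_disjoint_derived_complement[OF assms] \<open>x \<in> F\<close> by blast
  ultimately show ?thesis
    unfolding failed_zero_forcing_set_def by blast
qed

lemma fort_if_two_neighbours:
  assumes "F \<subseteq> V" and "V \<noteq> {}"
    and "\<forall>v \<in> V - F. \<exists>u1 u2. u1 \<noteq> u2 \<and> u1 \<in> F \<and> u2 \<in> F \<and> E v u1 \<and> E v u2"
  shows "fort V E F"
proof -
  obtain v where "v \<in> V"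
    using assms(2) by blast
  then have "F \<noteq> {}"
    using assms(3) by (cases "v \<in> F") auto
  moreover have "\<not> (\<exists>!u. u \<in> F \<and> E v u)" if "v \<in> V - F" for v
    using assms(3) that by auto
  ultimately show ?thesis
    using assms(1) unfolding fort_def by blast
qed

lemma card_le_failed_zf_number:
  assumes "finite V" and "failed_zero_forcing_set V E S"
  shows "card S \<le> failed_zf_number V E"
proof -
  have "{card S | S. failed_zero_forcing_set V E S} \<subseteq> {..card V}"
    using assms(1) by (auto simp: failed_zero_forcing_set_def intro: card_mono)
  then have "finite {card S | S. failed_zero_forcing_set V E S}"
    using finite_subset by blast
  with assms(2) show ?thesis
    unfolding failed_zf_number_def by (intro Max_ge) auto
qed

lemma two_neighbours_if_min_degree_ge_2:
  assumes "min_degree_ge V E 2" and "v \<in> V"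
  obtains u1 u2 where "u1 \<noteq> u2" "u1 \<in> V" "u2 \<in> V" "E v u1" "E v u2"
proof -
  let ?N = "{u \<in> V. E v u}"
  have deg: "2 \<le> card ?N"
    using assms unfolding min_degree_ge_def degree_def by blast
  then have "finite ?N"
    by (metis card.infinite not_numeral_le_zero)
  moreover have "\<not> card ?N \<le> Suc 0"
    using deg by simp
  ultimately obtain u1 u2 where "u1 \<in> ?N" "u2 \<in> ?N" "u1 \<noteq> u2"
    using card_le_Suc0_iff_eq by blast
  then show ?thesis
    using that by blast
qed

lemma bipartite_side_two_neighbours:
  assumes "min_degree_ge V E 2" and "\<forall>u v. E u v \<longrightarrow> (u \<in> A \<longleftrightarrow> v \<notin> A)" and "v \<in> V - A"
  shows "\<exists>u1 u2. u1 \<noteq> u2 \<and> u1 \<in> A \<and> u2 \<in> A \<and> E v u1 \<and> E v u2"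
proof -
  obtain u1 u2 where "u1 \<noteq> u2" "E v u1" "E v u2"
    using two_neighbours_if_min_degree_ge_2[OF assms(1), of v] assms(3) by blast
  with assms(2,3) show ?thesis by blast
qed

theorem corollary3:
  fixes V :: "'a set" and E EH :: "'a \<Rightarrow> 'a \<Rightarrow> bool"
  assumes "simple_graph V E"
    and "simple_graph V EH"
    and "\<forall>u v. EH u v \<longrightarrow> E u v"
    and "bipartite V EH"
    and "min_degree_ge V EH 2"
  shows "\<lceil>real (card V) / 2\<rceil> \<le> int (failed_zf_number V E)"
proof (cases "V = {}")
  case True
  then show ?thesis by simp
next
  case False
  have "finite V"
    using assms(1) unfolding simple_graph_def by blast
  obtain A where "A \<subseteq> V" and sides: "\<forall>u v. EH u v \<longrightarrow> (u \<in> A \<longleftrightarrow> v \<notin> A)"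
    using assms(4) unfolding bipartite_def by blast
  define F where "F = (if card A \<le> card (V - A) then A else V - A)"
  have "F \<subseteq> V"
    unfolding F_def using \<open>A \<subseteq> V\<close> by auto
  have "card F \<le> card (V - F)"
    unfolding F_def using \<open>A \<subseteq> V\<close> by (auto simp: Diff_Diff_Int Int_absorb1)
  have sides_F: "\<forall>u v. EH u v \<longrightarrow> (u \<in> F \<longleftrightarrow> v \<notin> F)"
    using sides assms(2) unfolding F_def simple_graph_def by auto
  have "\<exists>u1 u2. u1 \<noteq> u2 \<and> u1 \<in> F \<and> u2 \<in> F \<and> E v u1 \<and> E v u2" if "v \<in> V - F" for v
    using bipartite_side_two_neighbours[OF assms(5) sides_F that] assms(3) by blast
  then have "fort V E F"
    using fort_if_two_neighbours[OF \<open>F \<subseteq> V\<close> False] by blast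
  then have "card (V - F) \<le> failed_zf_number V E"
    using card_le_failed_zf_number[OF \<open>finite V\<close>] fort_complement_failed[OF assms(1)] by blast
  moreover have "card (V - F) + card F = card V"
    using \<open>F \<subseteq> V\<close> \<open>finite V\<close> by (metis card_Diff_subset card_mono diff_add finite_subset)
  ultimately show ?thesis
    using \<open>card F \<le> card (V - F)\<close> by (simp add: ceiling_le_iff)
qed

end
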